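(* Let $\ell\ge1$ and $D\ge0$, let $d$ be a distortion function on $\mathcal{X}^\ell\times\hat{\mathcal{X}}^\ell$, and let $Q:\mathcal{X}^\ell\to\hat{\mathcal{X}}^\ell$ satisfy $d(x^\ell,Q(x^\ell))\le\ell D$ for all $x^\ell$. Let $(f,g)$ be an IL FS encoder with $s$ states over the input alphabet $\hat{\mathcal{X}}^\ell$ (each $\ell$-block $\hat x^\ell$ being one input symbol), with output function $f:\mathcal{Z}\times\hat{\mathcal{X}}^\ell\to\mathcal{Y}$ and next-state function $g:\mathcal{Z}\times\hat{\mathcal{X}}^\ell\to\mathcal{Z}$. Define the $s\times s$ matrices $$K_{zz'}=\sum_{\{x^\ell\in\mathcal{X}^\ell:\ g(z,Q(x^\ell))=z'\}}2^{-L[f(z,Q(x^\ell))]},\qquad \hat K_{zz'}=\sum_{\{\hat x^\ell\in\hat{\mathcal{X}}^\ell:\ g(z,\hat x^\ell)=z'\}}2^{-L[f(z,\hat x^\ell)]}.$$ Let $\mathcal{B}(\hat x^\ell)=\{x^\ell\in\mathcal{X}^\ell: d(x^\ell,\hat x^\ell)\le\ell D\}$ and $B_\ell=\max_{\hat x^\ell\in\hat{\mathcal{X}}^\ell}|\mathcal{B}(\hat x^\ell)|$. Then $K\le B_\ell\hat K$ entrywise, and $\rho(K)\le B_\ell$.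
   Context: An FS encoder over a finite input alphabet $\mathcal{A}$ consists of a finite set $\mathcal{Z}$ of $s$ states, a finite set $\mathcal{Y}$ of binary strings (possibly including the empty string), an output function $f:\mathcal{Z}\times\mathcal{A}\to\mathcal{Y}$ and a next-state function $g:\mathcal{Z}\times\mathcal{A}\to\mathcal{Z}$; for $z\in\mathcal{Z}$ and $a^n\in\mathcal{A}^n$, with $z_1=z$, $z_{i+1}=g(z_i,a_i)$, $g(z,a^n)=z_{n+1}$ and $f(z,a^n)$ is the concatenated binary string $f(z_1,a_1)\cdots f(z_n,a_n)$ with length $L[f(z,a^n)]=\sum_i L[f(z_i,a_i)]$. It is information lossless (IL) if for every $z$ and $n$ the map $a^n\mapsto(f(z,a^n),g(z,a^n))$ is injective on $\mathcal{A}^n$. $\rho(\cdot)$ denotes spectral radius. *)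

theory Defs
  imports "HOL-Analysis.Analysis" "Jordan_Normal_Form.Spectral_Radius"
begin

fun fs_out :: "(nat \<Rightarrow> 'a \<Rightarrow> bool list) \<Rightarrow> (nat \<Rightarrow> 'a \<Rightarrow> nat) \<Rightarrow> nat \<Rightarrow> 'a list \<Rightarrow> bool list" where
  "fs_out f g z [] = []"
| "fs_out f g z (a # as) = f z a @ fs_out f g (g z a) as"

fun fs_state :: "(nat \<Rightarrow> 'a \<Rightarrow> nat) \<Rightarrow> nat \<Rightarrow> 'a list \<Rightarrow> nat" where
  "fs_state g z [] = z"
| "fs_state g z (a # as) = fs_state g (g z a) as"

definition fs_encoder :: "nat \<Rightarrow> 'a set \<Rightarrow> (nat \<Rightarrow> 'a \<Rightarrow> bool list) \<Rightarrow> (nat \<Rightarrow> 'a \<Rightarrow> nat) \<Rightarrow> bool" where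
  "fs_encoder s A f g \<longleftrightarrow> s \<ge> 1 \<and> finite A \<and> (\<forall>z<s. \<forall>a\<in>A. g z a < s)"

definition IL :: "nat \<Rightarrow> 'a set \<Rightarrow> (nat \<Rightarrow> 'a \<Rightarrow> bool list) \<Rightarrow> (nat \<Rightarrow> 'a \<Rightarrow> nat) \<Rightarrow> bool" where
  "IL s A f g \<longleftrightarrow> (\<forall>z<s. \<forall>n. inj_on (\<lambda>as. (fs_out f g z as, fs_state g z as))
                                   {as. length as = n \<and> set as \<subseteq> A})"

definition blocks :: "nat \<Rightarrow> 'a list set" where
  "blocks l = {xs. length xs = l}"

definition Kmat_entry :: "nat \<Rightarrow> ('x list \<Rightarrow> 'y list) \<Rightarrow> (nat \<Rightarrow> 'y list \<Rightarrow> bool list) \<Rightarrow> (nat \<Rightarrow> 'y list \<Rightarrow> nat) \<Rightarrow> nat \<Rightarrow> nat \<Rightarrow> real" where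
  "Kmat_entry l Q f g z z' = (\<Sum>x\<in>{x\<in>blocks l. g z (Q x) = z'}. 2 powr (- real (length (f z (Q x)))))"

definition Khat_entry :: "nat \<Rightarrow> (nat \<Rightarrow> 'y list \<Rightarrow> bool list) \<Rightarrow> (nat \<Rightarrow> 'y list \<Rightarrow> nat) \<Rightarrow> nat \<Rightarrow> nat \<Rightarrow> real" where
  "Khat_entry l f g z z' = (\<Sum>xh\<in>{xh\<in>blocks l. g z xh = z'}. 2 powr (- real (length (f z xh))))"

(* the s x s matrix K, as a complex matrix so that spectral_radius applies *)
definition K_matrix :: "nat \<Rightarrow> nat \<Rightarrow> ('x list \<Rightarrow> 'y list) \<Rightarrow> (nat \<Rightarrow> 'y list \<Rightarrow> bool list) \<Rightarrow> (nat \<Rightarrow> 'y list \<Rightarrow> nat) \<Rightarrow> complex mat" where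
  "K_matrix s l Q f g = mat s s (\<lambda>(z, z'). complex_of_real (Kmat_entry l Q f g z z'))"

definition dball :: "nat \<Rightarrow> ('x list \<Rightarrow> 'y list \<Rightarrow> real) \<Rightarrow> real \<Rightarrow> 'y list \<Rightarrow> 'x list set" where
  "dball l d D xh = {x\<in>blocks l. d x xh \<le> real l * D}"

definition B_l :: "nat \<Rightarrow> ('x::finite list \<Rightarrow> 'y::finite list \<Rightarrow> real) \<Rightarrow> real \<Rightarrow> nat" where
  "B_l l d D = Max ((\<lambda>xh. card (dball l d D xh)) ` (blocks l :: 'y list set))"

end

theory Submission
  imports Defs
begin

(* Each reproduction block y = Q(x) lies within distortion lD of x, so at most B_l source blocks
   share it; grouping the sum defining K_zz' by y gives K <= B_l Khat entrywise.
   For the spectral radius, K is the transition matrix of the encoder fed through Q, so an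
   eigenvalue e with eigenvector v satisfies e^n v_z = sum over n-block source words w of
   2^-L(output of w) v_(final state of w); taking z with |v_z| maximal, |e|^n is at most the
   Kraft sum of these outputs.  The same fibre counting bounds it by B_l^n times the Kraft sum
   of the encoder over n-block words, and information losslessness lets at most s words share
   an output string, so that Kraft sum grows only linearly in n.  Hence |e| <= B_l. *)

lemma sum_comp_le_card_fibers:
  fixes h :: "'b \<Rightarrow> real"
  assumes "finite A" and "finite C" and "Q ` A \<subseteq> C"
    and "\<And>y. y \<in> C \<Longrightarrow> card {x\<in>A. Q x = y} \<le> k y"
    and "\<And>y. y \<in> C \<Longrightarrow> h y \<ge> 0"
  shows "(\<Sum>x\<in>A. h (Q x)) \<le> (\<Sum>y\<in>C. real (k y) * h y)"
proof -
  have "(\<Sum>x\<in>A. h (Q x)) = (\<Sum>y\<in>C. \<Sum>x\<in>{x\<in>A. Q x = y}. h (Q x))"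
    using sum.group[OF assms(1-3), of "\<lambda>x. h (Q x)"] by simp
  also have "\<dots> = (\<Sum>y\<in>C. real (card {x\<in>A. Q x = y}) * h y)"
    by (intro sum.cong refl) auto
  also have "\<dots> \<le> (\<Sum>y\<in>C. real (k y) * h y)"
    using assms(4,5) by (intro sum_mono mult_right_mono) auto
  finally show ?thesis .
qed

lemma power_le_linear_mult_power_imp_le_base:
  fixes q B a b :: real
  assumes "q \<ge> 0" and "B \<ge> 0" and bound: "\<And>n. q ^ n \<le> B ^ n * (a * real n + b)"
  shows "q \<le> B"
proof (rule ccontr)
  assume "\<not> q \<le> B"
  then have "q > B" by simp
  show False
  proof (cases "B = 0")
    case True
    with bound[of 1] \<open>q > B\<close> show False by simp
  next
    case False
    with \<open>B \<ge> 0\<close> have "B > 0" by simp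
    define r where "r = q / B"
    have "r > 1" using \<open>q > B\<close> \<open>B > 0\<close> by (simp add: r_def)
    have "(\<lambda>n. real n / r ^ n) \<longlonglongrightarrow> 0"
      using lim_n_over_pown[of r] \<open>r > 1\<close> by simp
    moreover have "(\<lambda>n. inverse (r ^ n)) \<longlonglongrightarrow> 0"
      using LIMSEQ_inverse_realpow_zero \<open>r > 1\<close> by blast
    ultimately have "(\<lambda>n. a * (real n / r ^ n) + b * inverse (r ^ n)) \<longlonglongrightarrow> a * 0 + b * 0"
      by (intro tendsto_intros)
    then have "eventually (\<lambda>n. a * (real n / r ^ n) + b * inverse (r ^ n) < 1) sequentially"
      by (rule order_tendstoD) simp
    then obtain n where n: "a * (real n / r ^ n) + b * inverse (r ^ n) < 1"
      by (meson eventually_sequentially order_refl)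
    have "a * real n + b = (a * (real n / r ^ n) + b * inverse (r ^ n)) * r ^ n"
      using \<open>r > 1\<close> by (simp add: field_simps)
    also have "\<dots> < r ^ n"
      using n \<open>r > 1\<close> by simp
    finally have "a * real n + b < r ^ n" .
    moreover have "r ^ n * B ^ n \<le> B ^ n * (a * real n + b)"
      using bound[of n] \<open>B > 0\<close> by (simp add: r_def power_divide)
    with \<open>B > 0\<close> have "r ^ n \<le> a * real n + b"
      by (simp add: mult.commute)
    ultimately show False
      by simp
  qed
qed

definition words :: "'a set \<Rightarrow> nat \<Rightarrow> 'a list set" where
  "words A n = {ws. length ws = n \<and> set ws \<subseteq> A}"

lemma finite_words: "finite A \<Longrightarrow> finite (words A n)"
  using finite_lists_length_eq[of A n] by (simp add: words_def conj_commute)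

lemma words_0: "words A 0 = {[]}"
  by (auto simp: words_def)

lemma words_Suc: "words A (Suc n) = (\<lambda>(a, ws). a # ws) ` (A \<times> words A n)"
  by (auto simp: words_def length_Suc_conv image_iff)

lemma finite_blocks: "finite (blocks l :: 'a::finite list set)"
  using finite_lists_length_eq[of "UNIV :: 'a set" l] by (simp add: blocks_def)

(* path_sum A f g n h is T^n h for the transition operator (T h) z = \<Sum>a\<in>A. 2^-|f z a| h (g z a)
   of the encoder (path_sum_Suc); kraft_sum is T^n applied to the constant 1. *)
definition path_sum :: "'a set \<Rightarrow> (nat \<Rightarrow> 'a \<Rightarrow> bool list) \<Rightarrow> (nat \<Rightarrow> 'a \<Rightarrow> nat) \<Rightarrow> nat
    \<Rightarrow> (nat \<Rightarrow> 'b::real_vector) \<Rightarrow> nat \<Rightarrow> 'b" where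
  "path_sum A f g n h z =
     (\<Sum>ws\<in>words A n. 2 powr - real (length (fs_out f g z ws)) *\<^sub>R h (fs_state g z ws))"

abbreviation kraft_sum :: "'a set \<Rightarrow> (nat \<Rightarrow> 'a \<Rightarrow> bool list) \<Rightarrow> (nat \<Rightarrow> 'a \<Rightarrow> nat) \<Rightarrow> nat
    \<Rightarrow> nat \<Rightarrow> real" where
  "kraft_sum A f g n z \<equiv> path_sum A f g n (\<lambda>_. 1) z"

lemma path_sum_0: "path_sum A f g 0 h z = h z"
  by (simp add: path_sum_def words_0)

lemma path_sum_Suc:
  "path_sum A f g (Suc n) h z =
     (\<Sum>a\<in>A. 2 powr - real (length (f z a)) *\<^sub>R path_sum A f g n h (g z a))"
proof -
  have "inj_on (\<lambda>(a, ws). a # ws) (A \<times> words A n)"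
    by (auto simp: inj_on_def)
  then have "path_sum A f g (Suc n) h z =
      (\<Sum>(a, ws)\<in>A \<times> words A n.
         2 powr - real (length (fs_out f g z (a # ws))) *\<^sub>R h (fs_state g z (a # ws)))"
    unfolding path_sum_def words_Suc by (subst sum.reindex) (simp_all add: case_prod_beta comp_def)
  also have "\<dots> = (\<Sum>a\<in>A. 2 powr - real (length (f z a)) *\<^sub>R path_sum A f g n h (g z a))"
    unfolding sum.cartesian_product[symmetric] path_sum_def scaleR_sum_right
    by (intro sum.cong refl) (simp add: powr_add[symmetric])
  finally show ?thesis .
qed

lemma kraft_sum_nonneg: "kraft_sum A f g n z \<ge> 0"
  unfolding path_sum_def by (intro sum_nonneg) simp

lemma fs_state_less:
  assumes "\<forall>z<s. \<forall>a\<in>A. g z a < s" and "z < s" and "set ws \<subseteq> A"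
  shows "fs_state g z ws < s"
  using assms(2,3) by (induction ws arbitrary: z) (use assms(1) in auto)

lemma length_fs_out_le:
  assumes "\<forall>z<s. \<forall>a\<in>A. g z a < s" and "\<forall>z<s. \<forall>a\<in>A. length (f z a) \<le> c"
    and "z < s" and "set ws \<subseteq> A"
  shows "length (fs_out f g z ws) \<le> c * length ws"
  using assms(3,4) by (induction ws arbitrary: z) (use assms(1,2) in fastforce)+

lemma card_words_with_output_length_le:
  assumes "fs_encoder s A f g" and "IL s A f g" and "z < s"
  shows "card {ws\<in>words A n. length (fs_out f g z ws) = k} \<le> s * 2 ^ k"
proof -
  let ?S = "{ws\<in>words A n. length (fs_out f g z ws) = k}"
  let ?\<phi> = "\<lambda>ws. (fs_out f g z ws, fs_state g z ws)"
  let ?strings = "{bs :: bool list. set bs \<subseteq> UNIV \<and> length bs = k}"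
  have state_less: "fs_state g z ws < s" if "ws \<in> words A n" for ws
    using assms(1,3) that by (intro fs_state_less[of s A]) (auto simp: fs_encoder_def words_def)
  have "inj_on ?\<phi> (words A n)"
    using assms(2,3) unfolding IL_def words_def by blast
  then have "inj_on ?\<phi> ?S"
    by (rule inj_on_subset) auto
  moreover have "?\<phi> ` ?S \<subseteq> ?strings \<times> {..<s}"
    using state_less by auto
  moreover have "finite ?strings"
    using finite_lists_length_eq[of "UNIV :: bool set" k] by simp
  ultimately have "card ?S \<le> card (?strings \<times> {..<s})"
    by (intro card_inj_on_le) auto
  also have "\<dots> = s * 2 ^ k"
    using card_lists_length_eq[of "UNIV :: bool set" k] by (simp add: card_cartesian_product)
  finally show ?thesis .
qed

lemma IL_kraft_sum_linear_bound:
  assumes "fs_encoder s A f g" and "IL s A f g"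
  obtains c where "\<And>z n. z < s \<Longrightarrow> kraft_sum A f g n z \<le> real s * (real c * real n + 1)"
proof -
  have "finite A" and gs: "\<forall>z<s. \<forall>a\<in>A. g z a < s"
    using assms(1) by (auto simp: fs_encoder_def)
  then have "finite ((\<lambda>(z, a). length (f z a)) ` ({..<s} \<times> A))"
    by simp
  then obtain c where "\<forall>k\<in>(\<lambda>(z, a). length (f z a)) ` ({..<s} \<times> A). k \<le> c"
    unfolding finite_nat_set_iff_bounded_le by blast
  then have c: "\<forall>z<s. \<forall>a\<in>A. length (f z a) \<le> c"
    by auto
  have "kraft_sum A f g n z \<le> real s * (real c * real n + 1)" if "z < s" for z n
  proof -
    let ?L = "\<lambda>ws. length (fs_out f g z ws)"
    have "kraft_sum A f g n z = (\<Sum>ws\<in>words A n. (\<lambda>k. 2 powr - real k) (?L ws))"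
      by (simp add: path_sum_def)
    also have "\<dots> \<le> (\<Sum>k\<in>{..c * n}. real (s * 2 ^ k) * 2 powr - real k)"
    proof (rule sum_comp_le_card_fibers)
      show "finite (words A n)"
        using \<open>finite A\<close> by (rule finite_words)
      show "?L ` words A n \<subseteq> {..c * n}"
        using length_fs_out_le[OF gs c \<open>z < s\<close>] by (auto simp: words_def mult.commute)
      show "card {ws \<in> words A n. ?L ws = k} \<le> s * 2 ^ k" for k
        using assms \<open>z < s\<close> by (rule card_words_with_output_length_le)
    qed simp_all
    also have "\<dots> = (\<Sum>k\<in>{..c * n}. real s)"
      by (intro sum.cong refl) (simp add: powr_realpow[symmetric] powr_add[symmetric])
    also have "\<dots> = real s * (real c * real n + 1)"
      by simp
    finally show ?thesis .
  qed
  then show thesis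
    by (rule that)
qed

lemma kraft_sum_comp_le:
  assumes "finite A" and "finite C" and "Q ` A \<subseteq> C"
    and "\<And>y. y \<in> C \<Longrightarrow> card {x\<in>A. Q x = y} \<le> k"
  shows "kraft_sum A (\<lambda>z x. f z (Q x)) (\<lambda>z x. g z (Q x)) n z \<le> real k ^ n * kraft_sum C f g n z"
proof (induction n arbitrary: z)
  case 0
  then show ?case by (simp add: path_sum_0)
next
  case (Suc n)
  let ?w = "\<lambda>z y. 2 powr - real (length (f z y))"
  have "kraft_sum A (\<lambda>z x. f z (Q x)) (\<lambda>z x. g z (Q x)) (Suc n) z
      \<le> (\<Sum>x\<in>A. (\<lambda>y. ?w z y * (real k ^ n * kraft_sum C f g n (g z y))) (Q x))"
    unfolding path_sum_Suc using Suc.IH by (intro sum_mono mult_left_mono) auto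
  also have "\<dots> \<le> (\<Sum>y\<in>C. real k * (?w z y * (real k ^ n * kraft_sum C f g n (g z y))))"
    using assms by (intro sum_comp_le_card_fibers) (auto intro!: mult_nonneg_nonneg kraft_sum_nonneg)
  also have "\<dots> = real k ^ Suc n * kraft_sum C f g (Suc n) z"
    unfolding path_sum_Suc sum_distrib_left by (intro sum.cong refl) simp
  finally show ?case .
qed

lemma norm_path_sum_le:
  assumes "\<forall>z<s. \<forall>a\<in>A. g z a < s" and "\<forall>j<s. norm (h j) \<le> M" and "z < s"
  shows "norm (path_sum A f g n h z) \<le> M * kraft_sum A f g n z"
proof -
  have "norm (path_sum A f g n h z)
      \<le> (\<Sum>ws\<in>words A n. 2 powr - real (length (fs_out f g z ws)) * norm (h (fs_state g z ws)))"
    unfolding path_sum_def by (rule norm_sum[THEN order_trans]) simp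
  also have "\<dots> \<le> (\<Sum>ws\<in>words A n. 2 powr - real (length (fs_out f g z ws)) * M)"
    using assms(2) fs_state_less[OF assms(1,3)] by (intro sum_mono mult_left_mono) (auto simp: words_def)
  also have "\<dots> = M * kraft_sum A f g n z"
    by (simp add: path_sum_def sum_distrib_left mult.commute)
  finally show ?thesis .
qed

lemma card_fiber_le_B_l:
  fixes d :: "'x::finite list \<Rightarrow> 'y::finite list \<Rightarrow> real"
  assumes "\<forall>x\<in>blocks l. d x (Q x) \<le> real l * D" and "A \<subseteq> blocks l" and "y \<in> blocks l"
  shows "card {x\<in>A. Q x = y} \<le> B_l l d D"
proof -
  have "{x\<in>A. Q x = y} \<subseteq> dball l d D y"
    using assms(1,2) by (auto simp: dball_def)
  moreover have "finite (dball l d D y)"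
    using finite_blocks by (rule finite_subset[rotated]) (auto simp: dball_def)
  ultimately have "card {x\<in>A. Q x = y} \<le> card (dball l d D y)"
    by (rule card_mono[rotated])
  also have "\<dots> \<le> B_l l d D"
    unfolding B_l_def using finite_blocks assms(3) by (intro Max_ge) auto
  finally show ?thesis .
qed

lemma Kmat_entry_le_B_l_Khat_entry:
  fixes d :: "'x::finite list \<Rightarrow> 'y::finite list \<Rightarrow> real"
  assumes "\<forall>x\<in>blocks l. Q x \<in> blocks l" and "\<forall>x\<in>blocks l. d x (Q x) \<le> real l * D"
  shows "Kmat_entry l Q f g z z' \<le> real (B_l l d D) * Khat_entry l f g z z'"
proof -
  let ?A = "{x\<in>blocks l. g z (Q x) = z'}"
  let ?C = "{y\<in>blocks l. g z y = z'}"
  have "Kmat_entry l Q f g z z' = (\<Sum>x\<in>?A. (\<lambda>y. 2 powr - real (length (f z y))) (Q x))"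
    by (simp add: Kmat_entry_def)
  also have "\<dots> \<le> (\<Sum>y\<in>?C. real (B_l l d D) * 2 powr - real (length (f z y)))"
    using assms card_fiber_le_B_l[of l d Q D ?A]
    by (intro sum_comp_le_card_fibers) (auto intro: finite_subset[OF _ finite_blocks])
  also have "\<dots> = real (B_l l d D) * Khat_entry l f g z z'"
    by (simp add: Khat_entry_def sum_distrib_left)
  finally show ?thesis .
qed

lemma K_matrix_mult_vec_nth:
  fixes Q :: "'x::finite list \<Rightarrow> 'y list"
  assumes "\<forall>x\<in>blocks l. Q x \<in> blocks l" and "\<forall>z<s. \<forall>a\<in>blocks l. g z a < s"
    and "v \<in> carrier_vec s" and "z < s"
  shows "(K_matrix s l Q f g *\<^sub>v v) $ z =
           (\<Sum>x\<in>blocks l. 2 powr - real (length (f z (Q x))) *\<^sub>R v $ g z (Q x))"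
proof -
  have "(K_matrix s l Q f g *\<^sub>v v) $ z = (\<Sum>j\<in>{0..<s}. complex_of_real (Kmat_entry l Q f g z j) * v $ j)"
    using assms(3,4) by (simp add: K_matrix_def scalar_prod_def)
  also have "\<dots> = (\<Sum>j\<in>{0..<s}. \<Sum>x\<in>{x\<in>blocks l. g z (Q x) = j}.
                    2 powr - real (length (f z (Q x))) *\<^sub>R v $ g z (Q x))"
    unfolding Kmat_entry_def of_real_sum sum_distrib_right
    by (intro sum.cong refl) (auto simp: scaleR_conv_of_real)
  also have "\<dots> = (\<Sum>x\<in>blocks l. 2 powr - real (length (f z (Q x))) *\<^sub>R v $ g z (Q x))"
    using assms(1,2,4) by (intro sum.group finite_blocks) auto
  finally show ?thesis .
qed

lemma K_matrix_eigenvector_path_sum: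
  fixes Q :: "'x::finite list \<Rightarrow> 'y list"
  assumes "\<forall>x\<in>blocks l. Q x \<in> blocks l" and "\<forall>z<s. \<forall>a\<in>blocks l. g z a < s"
    and "v \<in> carrier_vec s" and "K_matrix s l Q f g *\<^sub>v v = e \<cdot>\<^sub>v v" and "z < s"
  shows "path_sum (blocks l) (\<lambda>z x. f z (Q x)) (\<lambda>z x. g z (Q x)) n (\<lambda>j. v $ j) z = e ^ n * v $ z"
  using assms(5)
proof (induction n arbitrary: z)
  case 0
  then show ?case by (simp add: path_sum_0)
next
  case (Suc n)
  have "path_sum (blocks l) (\<lambda>z x. f z (Q x)) (\<lambda>z x. g z (Q x)) (Suc n) (\<lambda>j. v $ j) z
      = (\<Sum>x\<in>blocks l. 2 powr - real (length (f z (Q x))) *\<^sub>R (e ^ n * v $ g z (Q x)))"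
    unfolding path_sum_Suc using Suc assms(1,2) by (intro sum.cong refl) auto
  also have "\<dots> = e ^ n * (K_matrix s l Q f g *\<^sub>v v) $ z"
    unfolding K_matrix_mult_vec_nth[OF assms(1-3) Suc.prems] scaleR_sum_right sum_distrib_left
    by (intro sum.cong refl) (simp add: scaleR_conv_of_real algebra_simps)
  also have "\<dots> = e ^ Suc n * v $ z"
    using assms(3,4) Suc.prems by simp
  finally show ?case .
qed

lemma K_matrix_eigenvalue_pow_le_kraft_sum:
  fixes Q :: "'x::finite list \<Rightarrow> 'y list"
  assumes "\<forall>x\<in>blocks l. Q x \<in> blocks l" and "\<forall>z<s. \<forall>a\<in>blocks l. g z a < s"
    and "e \<in> spectrum (K_matrix s l Q f g)"
  obtains i where "i < s"
    and "\<And>n. norm e ^ n \<le> kraft_sum (blocks l) (\<lambda>z x. f z (Q x)) (\<lambda>z x. g z (Q x)) n i"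
proof -
  obtain v where v: "v \<in> carrier_vec s" "v \<noteq> 0\<^sub>v s" and ev: "K_matrix s l Q f g *\<^sub>v v = e \<cdot>\<^sub>v v"
    using assms(3) by (auto simp: spectrum_def eigenvalue_def eigenvector_def K_matrix_def)
  obtain j where "j < s" "v $ j \<noteq> 0"
    using v by (metis eq_vecI carrier_vecD index_zero_vec)
  let ?norms = "(\<lambda>j. norm (v $ j)) ` {..<s}"
  have "Max ?norms \<in> ?norms"
    using \<open>j < s\<close> by (intro Max_in) auto
  then obtain i where "i < s" and i_Max: "norm (v $ i) = Max ?norms"
    by auto
  have i_max: "norm (v $ j) \<le> norm (v $ i)" if "j < s" for j
    unfolding i_Max using that by (intro Max_ge) auto
  have "norm (v $ j) > 0"
    using \<open>v $ j \<noteq> 0\<close> by simp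
  with i_max[OF \<open>j < s\<close>] have "norm (v $ i) > 0"
    by linarith
  have "norm e ^ n \<le> kraft_sum (blocks l) (\<lambda>z x. f z (Q x)) (\<lambda>z x. g z (Q x)) n i" for n
  proof -
    have "norm e ^ n * norm (v $ i)
        = norm (path_sum (blocks l) (\<lambda>z x. f z (Q x)) (\<lambda>z x. g z (Q x)) n (\<lambda>j. v $ j) i)"
      using K_matrix_eigenvector_path_sum[OF assms(1,2) v(1) ev \<open>i < s\<close>]
      by (simp add: norm_mult norm_power)
    also have "\<dots> \<le> norm (v $ i) * kraft_sum (blocks l) (\<lambda>z x. f z (Q x)) (\<lambda>z x. g z (Q x)) n i"
      using assms(1,2) i_max \<open>i < s\<close> by (intro norm_path_sum_le) auto
    finally show ?thesis
      using \<open>norm (v $ i) > 0\<close> by (simp add: mult.commute)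
  qed
  with \<open>i < s\<close> show thesis
    by (rule that)
qed

lemma K_matrix_eigenvalue_norm_le_B_l:
  fixes d :: "'x::finite list \<Rightarrow> 'y::finite list \<Rightarrow> real"
  assumes "\<forall>x\<in>blocks l. Q x \<in> blocks l" and "\<forall>x\<in>blocks l. d x (Q x) \<le> real l * D"
    and "fs_encoder s (blocks l) f g" and "IL s (blocks l) f g"
    and "e \<in> spectrum (K_matrix s l Q f g)"
  shows "norm e \<le> real (B_l l d D)"
proof -
  have gs: "\<forall>z<s. \<forall>a\<in>blocks l. g z a < s"
    using assms(3) by (simp add: fs_encoder_def)
  obtain i where "i < s"
    and pow_le: "\<And>n. norm e ^ n \<le> kraft_sum (blocks l) (\<lambda>z x. f z (Q x)) (\<lambda>z x. g z (Q x)) n i"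
    using K_matrix_eigenvalue_pow_le_kraft_sum[OF assms(1) gs assms(5)] by blast
  obtain c where kraft: "\<And>z n. z < s \<Longrightarrow> kraft_sum (blocks l) f g n z \<le> real s * (real c * real n + 1)"
    using IL_kraft_sum_linear_bound[OF assms(3,4)] by blast
  have "norm e ^ n \<le> real (B_l l d D) ^ n * (real s * real c * real n + real s)" for n
  proof -
    have "norm e ^ n \<le> kraft_sum (blocks l) (\<lambda>z x. f z (Q x)) (\<lambda>z x. g z (Q x)) n i"
      by (rule pow_le)
    also have "\<dots> \<le> real (B_l l d D) ^ n * kraft_sum (blocks l) f g n i"
      using assms(1) card_fiber_le_B_l[of l d Q D "blocks l"] assms(2)
      by (intro kraft_sum_comp_le finite_blocks) auto
    also have "\<dots> \<le> real (B_l l d D) ^ n * (real s * (real c * real n + 1))"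
      using kraft[OF \<open>i < s\<close>] by (rule mult_left_mono) simp
    finally show ?thesis
      by (simp add: algebra_simps)
  qed
  then show ?thesis
    by (rule power_le_linear_mult_power_imp_le_base[OF norm_ge_zero of_nat_0_le_iff])
qed

theorem mainTheorem9:
  fixes l s :: nat and D :: real
    and d :: "'x::finite list \<Rightarrow> 'y::finite list \<Rightarrow> real"
    and Q :: "'x list \<Rightarrow> 'y list"
    and f :: "nat \<Rightarrow> 'y list \<Rightarrow> bool list"
    and g :: "nat \<Rightarrow> 'y list \<Rightarrow> nat"
  assumes "l \<ge> 1" and "D \<ge> 0"
    and "\<forall>x y. d x y \<ge> 0"
    and "\<forall>x\<in>blocks l. Q x \<in> blocks l"
    and "\<forall>x\<in>blocks l. d x (Q x) \<le> real l * D"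
    and "fs_encoder s (blocks l) f g"
    and "IL s (blocks l) f g"
  shows "(\<forall>z<s. \<forall>z'<s. Kmat_entry l Q f g z z' \<le> real (B_l l d D) * Khat_entry l f g z z')
         \<and> spectral_radius (K_matrix s l Q f g) \<le> real (B_l l d D)"
proof
  show "\<forall>z<s. \<forall>z'<s. Kmat_entry l Q f g z z' \<le> real (B_l l d D) * Khat_entry l f g z z'"
    using Kmat_entry_le_B_l_Khat_entry[where d = d, OF assms(4,5)] by blast
  have "s > 0"
    using assms(6) by (simp add: fs_encoder_def)
  have "spectral_radius (K_matrix s l Q f g) \<in> norm ` spectrum (K_matrix s l Q f g)"
    by (rule spectral_radius_mem_max(1)[OF _ \<open>s > 0\<close>]) (simp add: K_matrix_def)
  then show "spectral_radius (K_matrix s l Q f g) \<le> real (B_l l d D)"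
    using K_matrix_eigenvalue_norm_le_B_l[where d = d, OF assms(4-7)] by auto
qed

end
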